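(* Let $G=\langle \Sigma_\tau, Q, \rightarrow, Q^0\rangle$ be a nondeterministic automaton with set of secret states $Q^S\subseteq Q$ and non-secret states $Q^{NS}=Q\setminus Q^S$. Let $\sim_o$ be an opaque observation equivalence on $G$ with respect to $Q^S$, and let $\tilde G$ be the quotient automaton of $G$ modulo $\sim_o$, with secret states $\tilde Q^S=\{[x]\mid x\in Q^S\}$. Then $det(G)$ and $det(\tilde G)$ are bisimilar, and $det_d(G)$ and $det_d(\tilde G)$ are bisimilar.
   Context: Automata: A (nondeterministic) automaton is $G=\langle \Sigma_\tau, Q,\rightarrow, Q^0\rangle$ where $\Sigma$ is a finite set of observable events, $\tau\notin\Sigma$ is a special symbol standing for every unobservable event, $\Sigma_\tau=\Sigma\cup\{\tau\}$, $Q$ is a finite state set, $\rightarrow\subseteq Q\times\Sigma_\tau\times Q$, and $Q^0\subseteq Q$ is the set of initial states. $G$ is deterministic if $|Q^0|=1$, it has no $\tau$-transitions, and $x\xrightarrow{\sigma}y_1$, $x\xrightarrow{\sigma}y_2$ imply $y_1=y_2$. For $s\in\Sigma^*$, $p\overset{s}{\Rightarrow}q$ means that there is a path from $p$ to $q$ whose label sequence, after deleting all occurrences of $\tau$, equals $s$ (for $s=\varepsilon$ this means a path consisting of zero or more $\tau$-transitions). Observer: for $B\subseteq Q$, $UR(B)=\{q\in Q\mid b\overset{\varepsilon}{\Rightarrow}q \text{ for some } b\in B\}$. The observer $det(G)=\langle\Sigma,X_{obs},\rightarrow_{obs},X^0_{obs}\rangle$ is the deterministic automaton with initial state $X^0_{obs}=UR(Q^0)$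 and transitions $X\xrightarrow{\sigma}_{obs}Y$ iff $Y=UR(\{y\mid x\xrightarrow{\sigma}y\text{ for some }x\in X\})\neq\emptyset$; $X_{obs}\subseteq 2^Q$ consists of the states reachable from $X^0_{obs}$. Secret states and desired observer: the state set is partitioned into secret states $Q^S$ and non-secret states $Q^{NS}=Q\setminus Q^S$. The desired observer $det_d(G)$ is obtained from $det(G)$ by deleting every observer state $X$ with $X\subseteq Q^S$ (together with its incident transitions) and keeping only the part reachable from the initial state. Quotient: for an equivalence relation $\sim$ on $Q$ with classes $[x]$, the quotient automaton is $\tilde G=\langle\Sigma_\tau,\{[x]\mid x\in Q\},\rightarrow_{/\sim},\{[x^0]\mid x^0\in Q^0\}\rangle$ with $[x]\xrightarrow{\sigma}_{/\sim}[y]$ iff $x'\xrightarrow{\sigma}y'$ for some $x'\in[x]$, $y'\in[y]$. Opaque observation equivalence: an equivalence relation $\sim_o\subseteq Q\times Q$ such that for all $x_1\sim_o x_2$: (i) if $x_1\overset{s}{\Rightarrow}y_1$ for some $s\in\Sigma^*$ then there is $y_2$ with $x_2\overset{s}{\Rightarrow}y_2$ and $y_1\sim_o y_2$; (ii) $x_1\in Q^S$ iff $x_2\in Q^S$. Bisimilarity: two automata $A_1,A_2$ over the same alphabet are bisimilar if there is a relation $R$ between their state sets relating every initial state of each to some initial state of the other, such that whenever $(p_1,p_2)\in R$ and $p_1\xrightarrow{\sigma}q_1$ there is $q_2$ with $p_2\xrightarrow{\sigma}q_2$ and $(q_1,q_2)\in R$, and symmetrically. *)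

theory Defs
  imports Main
begin

text \<open>Automata with states of type 'q and labels of type 'l.
  For the nondeterministic automaton G, labels are 'e option, where None is tau
  and Some a is the observable event a.\<close>

record ('q, 'l) aut =
  states :: "'q set"
  trans  :: "('q \<times> 'l \<times> 'q) set"
  init   :: "'q set"

definition wf_aut :: "'e set \<Rightarrow> ('q, 'e option) aut \<Rightarrow> bool" where
  "wf_aut \<Sigma> G \<longleftrightarrow> finite \<Sigma> \<and> finite (states G) \<and> init G \<subseteq> states G \<and>
     trans G \<subseteq> states G \<times> (insert None (Some ` \<Sigma>)) \<times> states G"

inductive weak :: "('q, 'e option) aut \<Rightarrow> 'q \<Rightarrow> 'e list \<Rightarrow> 'q \<Rightarrow> bool"
  for G where
  weak_refl: "weak G p [] p"
| weak_tau: "(p, None, r) \<in> trans G \<Longrightarrow> weak G r s q \<Longrightarrow> weak G p s q"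
| weak_obs: "(p, Some a, r) \<in> trans G \<Longrightarrow> weak G r s q \<Longrightarrow> weak G p (a # s) q"

definition UR :: "('q, 'e option) aut \<Rightarrow> 'q set \<Rightarrow> 'q set" where
  "UR G B = {q. \<exists>b\<in>B. weak G b [] q}"

definition obs_step :: "('q, 'e option) aut \<Rightarrow> 'q set \<Rightarrow> 'e \<Rightarrow> 'q set" where
  "obs_step G X \<sigma> = UR G {y. \<exists>x\<in>X. (x, Some \<sigma>, y) \<in> trans G}"

inductive_set reach :: "('q, 'l) aut \<Rightarrow> 'q set" for A where
  reach_init: "x \<in> init A \<Longrightarrow> x \<in> states A \<Longrightarrow> x \<in> reach A"
| reach_step: "x \<in> reach A \<Longrightarrow> (x, l, y) \<in> trans A \<Longrightarrow> y \<in> states A \<Longrightarrow> y \<in> reach A"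

definition trim :: "('q, 'l) aut \<Rightarrow> ('q, 'l) aut" where
  "trim A = \<lparr> states = reach A,
              trans = {(x, l, y). (x, l, y) \<in> trans A \<and> x \<in> reach A \<and> y \<in> reach A},
              init = init A \<inter> reach A \<rparr>"

definition det :: "'e set \<Rightarrow> ('q, 'e option) aut \<Rightarrow> ('q set, 'e) aut" where
  "det \<Sigma> G = trim \<lparr> states = UNIV,
      trans = {(X, \<sigma>, Y). \<sigma> \<in> \<Sigma> \<and> Y = obs_step G X \<sigma> \<and> Y \<noteq> {}},
      init = {UR G (init G)} \<rparr>"

definition delete_states :: "('q, 'l) aut \<Rightarrow> 'q set \<Rightarrow> ('q, 'l) aut" where
  "delete_states A D = \<lparr> states = states A - D,
      trans = {(x, l, y). (x, l, y) \<in> trans A \<and> x \<notin> D \<and> y \<notin> D},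
      init = init A - D \<rparr>"

definition det_d :: "'e set \<Rightarrow> ('q, 'e option) aut \<Rightarrow> 'q set \<Rightarrow> ('q set, 'e) aut" where
  "det_d \<Sigma> G QS = trim (delete_states (det \<Sigma> G) {X. X \<subseteq> QS})"

definition quotient_aut :: "('q, 'l) aut \<Rightarrow> ('q \<times> 'q) set \<Rightarrow> ('q set, 'l) aut" where
  "quotient_aut G R = \<lparr> states = states G // R,
      trans = {(R `` {x}, l, R `` {y}) | x l y. (x, l, y) \<in> trans G},
      init = {R `` {x} | x. x \<in> init G} \<rparr>"

definition opaque_obs_equiv :: "('q, 'e option) aut \<Rightarrow> 'q set \<Rightarrow> ('q \<times> 'q) set \<Rightarrow> bool" where
  "opaque_obs_equiv G QS R \<longleftrightarrow> equiv (states G) R \<and>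
     (\<forall>(x1, x2) \<in> R.
        (\<forall>s y1. weak G x1 s y1 \<longrightarrow> (\<exists>y2. weak G x2 s y2 \<and> (y1, y2) \<in> R)) \<and>
        (x1 \<in> QS \<longleftrightarrow> x2 \<in> QS))"

definition bisimilar :: "('p, 'l) aut \<Rightarrow> ('q, 'l) aut \<Rightarrow> bool" where
  "bisimilar A B \<longleftrightarrow> (\<exists>Rel. Rel \<subseteq> states A \<times> states B \<and>
     (\<forall>p \<in> init A. \<exists>q \<in> init B. (p, q) \<in> Rel) \<and>
     (\<forall>q \<in> init B. \<exists>p \<in> init A. (p, q) \<in> Rel) \<and>
     (\<forall>(p, q) \<in> Rel.
        (\<forall>l p'. (p, l, p') \<in> trans A \<longrightarrow> (\<exists>q'. (q, l, q') \<in> trans B \<and> (p', q') \<in> Rel)) \<and>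
        (\<forall>l q'. (q, l, q') \<in> trans B \<longrightarrow> (\<exists>p'. (p, l, p') \<in> trans A \<and> (p', q') \<in> Rel))))"

end

theory Submission
  imports Defs
begin

text \<open>Map every observer state X of G to the set of classes of its elements. On observer
  states, which are closed under unobservable reachability, this commutes with the observer
  transitions of G and of its quotient, because an opaque observation equivalence lets each weak
  path of the quotient be replayed in G from any representative of its start class. The map is
  therefore a functional bisimulation between the subset automata, and it preserves the property
  of consisting of secret states only, because classes do not mix secret and non-secret states;
  so it also survives the deletion of those observer states.\<close>

lemma weak_append: "weak G p s q \<Longrightarrow> weak G q t r \<Longrightarrow> weak G p (s @ t) r"
  by (induction rule: weak.induct) (auto intro: weak.intros)

lemma weak_singleton_decomp:
  assumes "weak G x [\<sigma>] q"
  obtains x' y' where "weak G x [] x'" "(x', Some \<sigma>, y') \<in> trans G" "weak G y' [] q"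
proof -
  have "weak G x s q \<Longrightarrow> s = [\<sigma>] \<Longrightarrow>
      \<exists>x' y'. weak G x [] x' \<and> (x', Some \<sigma>, y') \<in> trans G \<and> weak G y' [] q" for s
    by (induction rule: weak.induct) (blast intro: weak.intros)+
  then show thesis using assms that by blast
qed

lemma UR_UR: "UR G (UR G X) = UR G X"
  unfolding UR_def using weak_append[of G _ "[]" _ "[]"] by (auto intro: weak_refl)

lemma reach_subset_states: "x \<in> reach A \<Longrightarrow> x \<in> states A"
  by (induction rule: reach.induct) auto

locale functional_bisim =
  fixes P :: "'p \<Rightarrow> bool" and F :: "'p \<Rightarrow> 'q"
    and A :: "('p, 'l) aut" and B :: "('q, 'l) aut"
  assumes inv_init: "X \<in> init A \<Longrightarrow> P X"
    and inv_trans: "P X \<Longrightarrow> (X, l, Y) \<in> trans A \<Longrightarrow> P Y"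
    and map_trans: "P X \<Longrightarrow> (X, l, Y) \<in> trans A \<Longrightarrow> (F X, l, F Y) \<in> trans B"
    and lift_trans: "P X \<Longrightarrow> (F X, l, Z) \<in> trans B \<Longrightarrow> \<exists>Y. (X, l, Y) \<in> trans A \<and> Z = F Y"
    and map_states_iff: "P X \<Longrightarrow> F X \<in> states B \<longleftrightarrow> X \<in> states A"
    and init_eq: "init B = F ` init A"
begin

lemma reach_map: "X \<in> reach A \<Longrightarrow> P X \<and> F X \<in> reach B"
proof (induction rule: reach.induct)
  case (reach_init X)
  then show ?case using inv_init map_states_iff init_eq by (auto intro: reach.intros)
next
  case (reach_step X l Y)
  then show ?case using inv_trans map_trans map_states_iff by (meson reach.reach_step)
qed

lemma lift_trans_reach:
  assumes "X \<in> reach A" "(F X, l, Z) \<in> trans B" "Z \<in> reach B"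
  obtains Y where "(X, l, Y) \<in> trans A" "Y \<in> reach A" "Z = F Y"
proof -
  have "P X" using reach_map[OF assms(1)] ..
  then obtain Y where Y: "(X, l, Y) \<in> trans A" "Z = F Y" using lift_trans assms(2) by meson
  have "P Y" using inv_trans \<open>P X\<close> Y(1) .
  moreover have "F Y \<in> states B" using reach_subset_states assms(3) Y(2) by simp
  ultimately have "Y \<in> states A" using map_states_iff by simp
  with assms(1) Y(1) have "Y \<in> reach A" by (rule reach.reach_step)
  with Y show thesis using that by blast
qed

lemma lift_init_reach:
  assumes "Z \<in> init B" "Z \<in> reach B"
  obtains X where "X \<in> init A" "X \<in> reach A" "Z = F X"
proof -
  obtain X where X: "X \<in> init A" "Z = F X" using assms(1) init_eq by blast
  have "P X" using inv_init X(1) .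
  moreover have "F X \<in> states B" using reach_subset_states assms(2) X(2) by simp
  ultimately have "X \<in> states A" using map_states_iff by simp
  with X(1) have "X \<in> reach A" by (rule reach.reach_init)
  with X show thesis using that by blast
qed

lemma bisimilar_trim: "bisimilar (trim A) (trim B)"
proof -
  define Rel where "Rel = {(X, F X) | X. X \<in> reach A}"
  have forward: "\<exists>Z. (F X, l, Z) \<in> trans (trim B) \<and> (Y, Z) \<in> Rel"
    if X: "X \<in> reach A" and t: "(X, l, Y) \<in> trans (trim A)" for X l Y
  proof -
    have "(X, l, Y) \<in> trans A" "Y \<in> reach A" using t by (simp_all add: trim_def)
    then have "(F X, l, F Y) \<in> trans (trim B)"
      using X reach_map map_trans by (simp add: trim_def)
    then show ?thesis using \<open>Y \<in> reach A\<close> unfolding Rel_def by blast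
  qed
  have backward: "\<exists>Y. (X, l, Y) \<in> trans (trim A) \<and> (Y, Z) \<in> Rel"
    if X: "X \<in> reach A" and t: "(F X, l, Z) \<in> trans (trim B)" for X l Z
  proof -
    have "(F X, l, Z) \<in> trans B" "Z \<in> reach B" using t by (simp_all add: trim_def)
    then obtain Y where "(X, l, Y) \<in> trans A" "Y \<in> reach A" "Z = F Y"
      using lift_trans_reach X by blast
    then show ?thesis using X unfolding Rel_def by (auto simp: trim_def)
  qed
  have init_backward: "\<exists>X \<in> init (trim A). (X, Z) \<in> Rel" if "Z \<in> init (trim B)" for Z
  proof -
    have "Z \<in> init B" "Z \<in> reach B" using that by (simp_all add: trim_def)
    then obtain X where "X \<in> init A" "X \<in> reach A" "Z = F X"
      using lift_init_reach by blast
    then show ?thesis unfolding Rel_def by (auto simp: trim_def)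
  qed
  have init_forward: "\<exists>Z \<in> init (trim B). (X, Z) \<in> Rel" if "X \<in> init (trim A)" for X
  proof -
    have "X \<in> init A" "X \<in> reach A" using that by (simp_all add: trim_def)
    then show ?thesis using reach_map init_eq unfolding Rel_def by (auto simp: trim_def)
  qed
  have "Rel \<subseteq> states (trim A) \<times> states (trim B)"
    using reach_map unfolding Rel_def trim_def by auto
  with forward backward init_forward init_backward show ?thesis
    unfolding bisimilar_def by (intro exI[of _ Rel]) (auto simp: Rel_def)
qed

lemma delete_states:
  assumes "\<And>X. P X \<Longrightarrow> F X \<in> DB \<longleftrightarrow> X \<in> DA"
  shows "functional_bisim (\<lambda>X. X \<in> reach A) F
    (delete_states (trim A) DA) (delete_states (trim B) DB)"
proof
  fix X assume "X \<in> init (delete_states (trim A) DA)"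
  then show "X \<in> reach A" by (simp add: delete_states_def trim_def)
next
  fix X l Y assume "(X, l, Y) \<in> trans (delete_states (trim A) DA)"
  then show "Y \<in> reach A" by (simp add: delete_states_def trim_def)
next
  fix X l Y assume X: "X \<in> reach A" and t: "(X, l, Y) \<in> trans (delete_states (trim A) DA)"
  then have "(X, l, Y) \<in> trans A" "Y \<in> reach A" "X \<notin> DA" "Y \<notin> DA"
    by (simp_all add: delete_states_def trim_def)
  then show "(F X, l, F Y) \<in> trans (delete_states (trim B) DB)"
    using X reach_map map_trans assms by (simp add: delete_states_def trim_def)
next
  fix X l Z assume X: "X \<in> reach A" and t: "(F X, l, Z) \<in> trans (delete_states (trim B) DB)"
  then have "(F X, l, Z) \<in> trans B" "Z \<in> reach B" "Z \<notin> DB" "F X \<notin> DB"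
    by (simp_all add: delete_states_def trim_def)
  moreover obtain Y where "(X, l, Y) \<in> trans A" "Y \<in> reach A" "Z = F Y"
    using lift_trans_reach X calculation(1,2) by blast
  ultimately show "\<exists>Y. (X, l, Y) \<in> trans (delete_states (trim A) DA) \<and> Z = F Y"
    using X reach_map assms by (auto simp: delete_states_def trim_def)
next
  fix X assume "X \<in> reach A"
  then show "F X \<in> states (delete_states (trim B) DB) \<longleftrightarrow> X \<in> states (delete_states (trim A) DA)"
    using reach_map assms by (simp add: delete_states_def trim_def)
next
  show "init (delete_states (trim B) DB) = F ` init (delete_states (trim A) DA)"
  proof (intro equalityI subsetI)
    fix Z assume "Z \<in> init (delete_states (trim B) DB)"
    then have Z: "Z \<in> init B" "Z \<in> reach B" "Z \<notin> DB" by (simp_all add: delete_states_def trim_def)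
    then obtain X where "X \<in> init A" "X \<in> reach A" "Z = F X" using lift_init_reach by blast
    then show "Z \<in> F ` init (delete_states (trim A) DA)"
      using Z(3) reach_map assms by (auto simp: delete_states_def trim_def)
  next
    fix Z assume "Z \<in> F ` init (delete_states (trim A) DA)"
    then obtain X where "X \<in> init A" "X \<in> reach A" "X \<notin> DA" "Z = F X"
      by (auto simp: delete_states_def trim_def)
    then show "Z \<in> init (delete_states (trim B) DB)"
      using reach_map init_eq assms by (auto simp: delete_states_def trim_def)
  qed
qed

end

definition subset_aut :: "'e set \<Rightarrow> ('q, 'e option) aut \<Rightarrow> ('q set, 'e) aut" where
  "subset_aut \<Sigma> G = \<lparr> states = UNIV,
      trans = {(X, \<sigma>, Y). \<sigma> \<in> \<Sigma> \<and> Y = obs_step G X \<sigma> \<and> Y \<noteq> {}},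
      init = {UR G (init G)} \<rparr>"

lemma det_eq_trim_subset_aut: "det \<Sigma> G = trim (subset_aut \<Sigma> G)"
  unfolding det_def subset_aut_def ..

locale obs_equiv_quotient =
  fixes G :: "('q, 'e option) aut" and R :: "('q \<times> 'q) set"
  assumes equiv: "equiv (states G) R"
    and weak_sim: "(x1, x2) \<in> R \<Longrightarrow> weak G x1 s y1 \<Longrightarrow> \<exists>y2. weak G x2 s y2 \<and> (y1, y2) \<in> R"
    and trans_closed: "(x, l, y) \<in> trans G \<Longrightarrow> x \<in> states G \<and> y \<in> states G"
    and init_closed: "init G \<subseteq> states G"
begin

definition classes :: "'q set \<Rightarrow> 'q set set" where
  "classes X = (\<lambda>x. R `` {x}) ` X"

lemma trans_quotient_iff: "(C, l, D) \<in> trans (quotient_aut G R) \<longleftrightarrow>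
    (\<exists>x y. C = R `` {x} \<and> D = R `` {y} \<and> (x, l, y) \<in> trans G)"
  unfolding quotient_aut_def by simp

lemma trans_quotientI: "(x, l, y) \<in> trans G \<Longrightarrow> (R `` {x}, l, R `` {y}) \<in> trans (quotient_aut G R)"
  unfolding trans_quotient_iff by blast

lemma weak_states: "weak G p s q \<Longrightarrow> p \<in> states G \<Longrightarrow> q \<in> states G"
  by (induction rule: weak.induct) (auto dest: trans_closed)

lemma weak_quotient: "weak G p s q \<Longrightarrow> weak (quotient_aut G R) (R `` {p}) s (R `` {q})"
  by (induction rule: weak.induct) (blast intro: weak.intros trans_quotientI)+

lemma weak_sim_class:
  assumes "R `` {x'} = R `` {x}" "x \<in> states G" "weak G x' s y'"
  obtains y where "weak G x s y" "R `` {y'} = R `` {y}" "y \<in> states G"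
proof -
  have "x \<in> R `` {x'}" using assms(1,2) equiv_class_self[OF equiv] by simp
  then obtain y where "weak G x s y" "(y', y) \<in> R" using weak_sim assms(3) by blast
  then show thesis using that equiv_class_eq[OF equiv] weak_states assms(2) by blast
qed

lemma trans_quotient_lower:
  assumes "(R `` {x}, l, D) \<in> trans (quotient_aut G R)" "x \<in> states G"
    and "\<And>x' y'. (x', l, y') \<in> trans G \<Longrightarrow> weak G x' w y'"
  obtains y where "weak G x w y" "D = R `` {y}" "y \<in> states G"
proof -
  obtain x' y' where "R `` {x'} = R `` {x}" "D = R `` {y'}" "(x', l, y') \<in> trans G"
    using assms(1) by (auto simp: trans_quotient_iff)
  with assms(2,3) show thesis using that weak_sim_class by metis
qed

lemma weak_quotient_lower:
  "weak (quotient_aut G R) (R `` {x}) s D \<Longrightarrow> x \<in> states G \<Longrightarrow> \<exists>y. weak G x s y \<and> D = R `` {y}"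
proof (induction "R `` {x}" s D arbitrary: x rule: weak.induct)
  case weak_refl
  then show ?case by (auto intro: weak.intros)
next
  case (weak_tau r s q)
  then obtain y where y: "weak G x [] y" "r = R `` {y}" "y \<in> states G"
    by (elim trans_quotient_lower) (auto intro: weak.intros)
  with weak_tau.hyps(3) obtain z where "weak G y s z" "q = R `` {z}" by blast
  then show ?case using weak_append[OF y(1)] by fastforce
next
  case (weak_obs a r s q)
  then obtain y where y: "weak G x [a] y" "r = R `` {y}" "y \<in> states G"
    by (elim trans_quotient_lower) (auto intro: weak.intros)
  with weak_obs.hyps(3) obtain z where "weak G y s z" "q = R `` {z}" by blast
  then show ?case using weak_append[OF y(1)] by fastforce
qed

lemma UR_subset_states: "B \<subseteq> states G \<Longrightarrow> UR G B \<subseteq> states G"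
  unfolding UR_def using weak_states by blast

lemma obs_step_subset_states: "obs_step G X \<sigma> \<subseteq> states G"
  unfolding obs_step_def UR_def using weak_states trans_closed by blast

lemma UR_quotient: "B \<subseteq> states G \<Longrightarrow> UR (quotient_aut G R) (classes B) = classes (UR G B)"
  unfolding UR_def classes_def using weak_quotient weak_quotient_lower by fastforce

lemma obs_step_quotient:
  assumes "X \<subseteq> states G" "UR G X = X"
  shows "obs_step (quotient_aut G R) (classes X) \<sigma> = classes (obs_step G X \<sigma>)"
proof (intro equalityI subsetI)
  fix D assume "D \<in> classes (obs_step G X \<sigma>)"
  then obtain x y q where "x \<in> X" "(x, Some \<sigma>, y) \<in> trans G" "weak G y [] q" "D = R `` {q}"
    unfolding classes_def obs_step_def UR_def by auto
  then show "D \<in> obs_step (quotient_aut G R) (classes X) \<sigma>"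
    unfolding classes_def obs_step_def UR_def
    by (auto simp: trans_quotient_iff intro!: weak_quotient)
next
  fix D assume "D \<in> obs_step (quotient_aut G R) (classes X) \<sigma>"
  then obtain x C where x: "x \<in> X" and "(R `` {x}, Some \<sigma>, C) \<in> trans (quotient_aut G R)"
    and "weak (quotient_aut G R) C [] D"
    unfolding classes_def obs_step_def UR_def by auto
  then have "weak (quotient_aut G R) (R `` {x}) [\<sigma>] D" by (auto intro: weak.intros)
  then obtain q where q: "weak G x [\<sigma>] q" "D = R `` {q}"
    using weak_quotient_lower x assms(1) by blast
  obtain x' y' where "weak G x [] x'" "(x', Some \<sigma>, y') \<in> trans G" "weak G y' [] q"
    using q(1) by (rule weak_singleton_decomp)
  moreover from this(1) have "x' \<in> X" using x assms(2) unfolding UR_def by blast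
  ultimately show "D \<in> classes (obs_step G X \<sigma>)"
    using q(2) unfolding classes_def obs_step_def UR_def by blast
qed

lemma functional_bisim_subset_aut:
  "functional_bisim (\<lambda>X. X \<subseteq> states G \<and> UR G X = X) classes
    (subset_aut \<Sigma> G) (subset_aut \<Sigma> (quotient_aut G R))"
proof
  fix X assume "X \<in> init (subset_aut \<Sigma> G)"
  then show "X \<subseteq> states G \<and> UR G X = X"
    using UR_subset_states init_closed by (auto simp: subset_aut_def UR_UR)
next
  fix X l Y assume "(X, l, Y) \<in> trans (subset_aut \<Sigma> G)"
  then show "Y \<subseteq> states G \<and> UR G Y = Y"
    using obs_step_subset_states by (auto simp: subset_aut_def obs_step_def UR_UR)
next
  fix X l Y assume "X \<subseteq> states G \<and> UR G X = X" "(X, l, Y) \<in> trans (subset_aut \<Sigma> G)"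
  then show "(classes X, l, classes Y) \<in> trans (subset_aut \<Sigma> (quotient_aut G R))"
    using obs_step_quotient by (auto simp: subset_aut_def classes_def)
next
  fix X l Z assume "X \<subseteq> states G \<and> UR G X = X"
    "(classes X, l, Z) \<in> trans (subset_aut \<Sigma> (quotient_aut G R))"
  then show "\<exists>Y. (X, l, Y) \<in> trans (subset_aut \<Sigma> G) \<and> Z = classes Y"
    using obs_step_quotient by (auto simp: subset_aut_def classes_def)
next
  fix X
  show "classes X \<in> states (subset_aut \<Sigma> (quotient_aut G R)) \<longleftrightarrow> X \<in> states (subset_aut \<Sigma> G)"
    by (simp add: subset_aut_def)
next
  have "init (quotient_aut G R) = classes (init G)"
    unfolding quotient_aut_def classes_def by auto
  then show "init (subset_aut \<Sigma> (quotient_aut G R)) = classes ` init (subset_aut \<Sigma> G)"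
    using UR_quotient init_closed by (simp add: subset_aut_def)
qed

lemma classes_subset_secret_iff:
  assumes "\<And>x1 x2. (x1, x2) \<in> R \<Longrightarrow> x1 \<in> QS \<longleftrightarrow> x2 \<in> QS" "X \<subseteq> states G"
  shows "classes X \<subseteq> {R `` {x} | x. x \<in> QS} \<longleftrightarrow> X \<subseteq> QS"
proof
  assume secret: "classes X \<subseteq> {R `` {x} | x. x \<in> QS}"
  show "X \<subseteq> QS"
  proof
    fix x assume "x \<in> X"
    then obtain q where "q \<in> QS" "R `` {x} = R `` {q}" using secret unfolding classes_def by blast
    moreover have "x \<in> R `` {x}" using \<open>x \<in> X\<close> assms(2) equiv_class_self[OF equiv] by blast
    ultimately show "x \<in> QS" using assms(1) by blast
  qed
qed (auto simp: classes_def)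

end

theorem proposition1:
  fixes \<Sigma> :: "'e set" and G :: "('q, 'e option) aut" and QS :: "'q set"
    and R :: "('q \<times> 'q) set"
  assumes "wf_aut \<Sigma> G"
    and "QS \<subseteq> states G"
    and "opaque_obs_equiv G QS R"
  shows "bisimilar (det \<Sigma> G) (det \<Sigma> (quotient_aut G R))
    \<and> bisimilar (det_d \<Sigma> G QS)
        (det_d \<Sigma> (quotient_aut G R) {R `` {x} | x. x \<in> QS})"
proof -
  interpret obs_equiv_quotient G R
    using assms(1,3) unfolding wf_aut_def opaque_obs_equiv_def
    by unfold_locales blast+
  interpret functional_bisim "\<lambda>X. X \<subseteq> states G \<and> UR G X = X" classes
      "subset_aut \<Sigma> G" "subset_aut \<Sigma> (quotient_aut G R)"
    by (rule functional_bisim_subset_aut)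
  have secret_saturated: "(x1, x2) \<in> R \<Longrightarrow> x1 \<in> QS \<longleftrightarrow> x2 \<in> QS" for x1 x2
    using assms(3) unfolding opaque_obs_equiv_def by blast
  have "functional_bisim (\<lambda>X. X \<in> reach (subset_aut \<Sigma> G)) classes
      (delete_states (trim (subset_aut \<Sigma> G)) {X. X \<subseteq> QS})
      (delete_states (trim (subset_aut \<Sigma> (quotient_aut G R))) {Y. Y \<subseteq> {R `` {x} | x. x \<in> QS}})"
    using classes_subset_secret_iff[OF secret_saturated] by (intro delete_states) auto
  then show ?thesis
    using bisimilar_trim functional_bisim.bisimilar_trim
    by (simp add: det_d_def det_eq_trim_subset_aut)
qed

end
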